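(* Let $n$ be a positive integer, $f:\mathbb{Z}_n\to\mathbb C$, and $m,l\le n$ positive integers. Then \[\sum_{r\in\mathbb{Z}_n}|\widehat f(r)|^2\cdot\min\left(\frac{m^2\gcd(r,n)}{n},\,m\right)\le\sum_{1\le k\le l:\ k\mid n}\frac{m^2\phi(k)}{k}G_f(n/k)+\sum_{l<k\le n:\ k\mid n}\frac{mn}{k}G_f(n/k).\]
   Context: The Fourier transform is $\widehat f(s)=\sum_{x\in\mathbb{Z}_n}f(x)e^{-2\pi i xs/n}$. For $r\in\mathbb{Z}_n$, $\gcd(r,n)$ is computed from any integer representative (so $\gcd(0,n)=n$). For a positive divisor $r$ of $n$ and $a\in\mathbb{Z}_n$, $g_f(a,r)=\sum_{x\in\mathbb{Z}_n:\,x=a+jr\text{ for some }j\in\mathbb{Z}_n}f(x)$ and $G_f(r)=\sum_{a=0}^{r-1}|g_f(a,r)|^2$. $\phi$ is Euler's totient function. *)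

theory Defs
  imports "HOL-Analysis.Analysis" "HOL-Number_Theory.Number_Theory"
begin

text \<open>Z_n is modelled by the representatives {0..<n}; f :: nat \<Rightarrow> complex is read on {0..<n}.\<close>

definition fourier :: "nat \<Rightarrow> (nat \<Rightarrow> complex) \<Rightarrow> nat \<Rightarrow> complex" where
  "fourier n f s = (\<Sum>x<n. f x * cis (- 2 * pi * real x * real s / real n))"

definition gsum :: "nat \<Rightarrow> (nat \<Rightarrow> complex) \<Rightarrow> nat \<Rightarrow> nat \<Rightarrow> complex" where
  "gsum n f a r = (\<Sum>x\<in>{x. x < n \<and> (\<exists>j<n. x = (a + j * r) mod n)}. f x)"

definition Gsum :: "nat \<Rightarrow> (nat \<Rightarrow> complex) \<Rightarrow> nat \<Rightarrow> real" where
  "Gsum n f r = (\<Sum>a<r. (cmod (gsum n f a r))^2)"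

end

theory Submission
  imports Defs "HOL-Library.Real_Mod"
begin

text \<open>For a divisor k of n, the Fourier coefficients at the multiples of k are the discrete Fourier
transform of length n/k of the coset sums g_f(a, n/k), so Parseval gives
\<Sum>{|f^(s)|^2 : k | s} = (n/k) G_f(n/k). The weight min(m^2 gcd(s,n)/n, m) of |f^(s)|^2 is then
dominated by a sum over the divisors k of gcd(s,n): if gcd(s,n) \<le> l, by the terms m^2 \<phi>(k)/n for
k \<le> l, which add up to m^2 gcd(s,n)/n since \<Sum>{\<phi>(k) : k | d} = d; otherwise by the single
term m for k = gcd(s,n) > l. Exchanging the sums over s and k yields the bound.\<close>

lemma sum_cis_roots_of_unity:
  fixes d :: int and r :: nat
  assumes "0 < r"
  shows "(\<Sum>t<r. cis (2 * pi * of_int d * real t / real r)) = (if int r dvd d then of_nat r else 0)"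
proof -
  define w where "w = cis (2 * pi * of_int d / real r)"
  have pow: "cis (2 * pi * of_int d * real t / real r) = w ^ t" for t
    unfolding w_def Complex.DeMoivre by (simp add: field_simps)
  have "w = 1 \<longleftrightarrow> (\<exists>N. of_int d = of_int N * real r)"
    unfolding w_def cis_eq_1_iff using assms by (auto simp: field_simps)
  also have "\<dots> \<longleftrightarrow> int r dvd d"
    by (metis dvd_def mult.commute of_int_eq_iff of_int_mult of_int_of_nat_eq)
  finally have w_eq_1: "w = 1 \<longleftrightarrow> int r dvd d" .
  show ?thesis
  proof (cases "int r dvd d")
    case True
    then show ?thesis using w_eq_1 by (simp add: pow)
  next
    case False
    have "w ^ r = 1"
      using assms by (simp add: w_def Complex.DeMoivre)
    then show ?thesis
      using False w_eq_1 geometric_sum[of w r] by (simp add: pow)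
  qed
qed

lemma sum_cis_orthogonality:
  fixes a b r :: nat
  assumes "a < r" "b < r"
  shows "(\<Sum>t<r. cis (2 * pi * (real b - real a) * real t / real r)) = (if a = b then of_nat r else 0)"
proof -
  have "int r dvd int b - int a \<longleftrightarrow> a = b"
    using assms dvd_imp_le_int[of "int b - int a" "int r"] by (cases "a = b") auto
  then show ?thesis
    using sum_cis_roots_of_unity[of r "int b - int a"] assms by simp
qed

lemma fourier_parseval:
  fixes g :: "nat \<Rightarrow> complex" and r :: nat
  assumes "0 < r"
  shows "(\<Sum>t<r. (cmod (fourier r g t))^2) = real r * (\<Sum>a<r. (cmod (g a))^2)"
proof -
  define c where "c a t = cis (-2 * pi * real a * real t / real r)" for a t :: nat
  have c_cnj: "c a t * cnj (c b t) = cis (2 * pi * (real b - real a) * real t / real r)" for a b t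
    unfolding c_def cis_cnj cis_mult by (rule arg_cong[where f=cis]) (use assms in \<open>simp add: field_simps\<close>)
  have "complex_of_real (\<Sum>t<r. (cmod (fourier r g t))^2)
      = (\<Sum>t<r. (\<Sum>a<r. g a * c a t) * cnj (\<Sum>b<r. g b * c b t))"
    unfolding fourier_def c_def by (simp only: of_real_sum complex_norm_square)
  also have "\<dots> = (\<Sum>t<r. \<Sum>a<r. \<Sum>b<r. g a * cnj (g b) * (c a t * cnj (c b t)))"
    by (simp add: cnj_sum sum_product mult_ac)
  also have "\<dots> = (\<Sum>a<r. \<Sum>t<r. \<Sum>b<r. g a * cnj (g b) * (c a t * cnj (c b t)))"
    by (rule sum.swap)
  also have "\<dots> = (\<Sum>a<r. \<Sum>b<r. \<Sum>t<r. g a * cnj (g b) * (c a t * cnj (c b t)))"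
    by (intro sum.cong refl sum.swap)
  also have "\<dots> = (\<Sum>a<r. \<Sum>b<r. g a * cnj (g b) * (\<Sum>t<r. c a t * cnj (c b t)))"
    by (simp add: sum_distrib_left)
  also have "\<dots> = (\<Sum>a<r. \<Sum>b<r. g a * cnj (g b) * (if a = b then of_nat r else 0))"
    by (intro sum.cong refl) (simp add: c_cnj sum_cis_orthogonality)
  also have "\<dots> = (\<Sum>a<r. of_nat r * (g a * cnj (g a)))"
    by (simp add: if_distrib sum.delta mult_ac cong: if_cong)
  also have "\<dots> = complex_of_real (real r * (\<Sum>a<r. (cmod (g a))^2))"
    by (simp only: of_real_mult of_real_sum complex_norm_square of_real_of_nat_eq sum_distrib_left)
  finally show ?thesis
    by (simp only: of_real_eq_iff)
qed

lemma gsum_eq_sum_mod: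
  assumes "r dvd n" "a < r"
  shows "gsum n f a r = (\<Sum>x | x < n \<and> x mod r = a. f x)"
proof -
  have "(\<exists>j<n. x = (a + j * r) mod n) \<longleftrightarrow> x mod r = a" if "x < n" for x
  proof
    assume "\<exists>j<n. x = (a + j * r) mod n"
    then obtain j where "x = (a + j * r) mod n" by blast
    then show "x mod r = a"
      using assms by (simp add: mod_mod_cancel)
  next
    assume "x mod r = a"
    then have "x = (a + (x div r) * r) mod n"
      using \<open>x < n\<close> by (metis mod_div_mult_eq mod_less)
    moreover have "x div r < n"
      using \<open>x < n\<close> div_le_dividend le_less_trans by blast
    ultimately show "\<exists>j<n. x = (a + j * r) mod n" by blast
  qed
  then have "{x. x < n \<and> (\<exists>j<n. x = (a + j * r) mod n)} = {x. x < n \<and> x mod r = a}"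
    by blast
  then show ?thesis
    by (simp add: gsum_def)
qed

lemma fourier_mult_eq_fourier_gsum:
  assumes "k * r = n" "0 < n"
  shows "fourier n f (t * k) = fourier r (\<lambda>a. gsum n f a r) t"
proof -
  have "0 < k" "0 < r" "r dvd n"
    using assms by auto
  have periodic: "cis (-2 * pi * real x * real t / real r) = cis (-2 * pi * real (x mod r) * real t / real r)" for x
  proof -
    have "real x = real (x mod r) + real r * real (x div r)"
      by (metis of_nat_add of_nat_mult mod_mult_div_eq add.commute)
    then have "-2 * pi * real x * real t / real r
        = -2 * pi * real (x mod r) * real t / real r + 2 * pi * (- real (x div r * t))"
      using \<open>0 < r\<close> by (simp add: field_simps)
    then have "cis (-2 * pi * real x * real t / real r)
        = cis (-2 * pi * real (x mod r) * real t / real r) * cis (2 * pi * (- real (x div r * t)))"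
      by (simp only: cis_mult)
    moreover have "cis (2 * pi * (- real (x div r * t))) = 1"
      by (metis Ints_minus Ints_of_nat cis_multiple_2pi)
    ultimately show ?thesis
      by simp
  qed
  have "fourier n f (t * k) = (\<Sum>x<n. f x * cis (-2 * pi * real (x mod r) * real t / real r))"
    unfolding fourier_def periodic[symmetric]
    using \<open>0 < k\<close> by (simp flip: assms(1) add: field_simps)
  also have "\<dots> = (\<Sum>a<r. \<Sum>x | x < n \<and> x mod r = a. f x * cis (-2 * pi * real a * real t / real r))"
    by (subst sum.group[symmetric, of "{..<n}" "{..<r}" "\<lambda>x. x mod r"])
       (use \<open>0 < r\<close> in \<open>auto intro!: sum.cong\<close>)
  also have "\<dots> = fourier r (\<lambda>a. gsum n f a r) t"
    unfolding fourier_def using gsum_eq_sum_mod[OF \<open>r dvd n\<close>]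
    by (intro sum.cong refl) (simp add: sum_distrib_right)
  finally show ?thesis .
qed

lemma sum_fourier_multiples:
  assumes "k dvd n" "0 < n"
  shows "(\<Sum>s | s < n \<and> k dvd s. (cmod (fourier n f s))^2) = real (n div k) * Gsum n f (n div k)"
proof -
  define r where "r = n div k"
  have "k * r = n" "0 < k" "0 < r"
    using assms by (auto simp: r_def)
  have "{s. s < n \<and> k dvd s} = (\<lambda>t. t * k) ` {..<r}"
  proof (rule Set.set_eqI, rule iffI)
    fix s assume "s \<in> {s. s < n \<and> k dvd s}"
    then show "s \<in> (\<lambda>t. t * k) ` {..<r}"
      using \<open>k * r = n\<close> by (auto elim!: dvdE simp: mult.commute)
  next
    fix s assume "s \<in> (\<lambda>t. t * k) ` {..<r}"
    then show "s \<in> {s. s < n \<and> k dvd s}"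
      using \<open>k * r = n\<close> \<open>0 < k\<close> by (auto simp: mult.commute)
  qed
  then have "(\<Sum>s | s < n \<and> k dvd s. (cmod (fourier n f s))^2) = (\<Sum>t<r. (cmod (fourier n f (t * k)))^2)"
    using \<open>0 < k\<close> by (simp add: sum.reindex inj_on_def)
  also have "\<dots> = (\<Sum>t<r. (cmod (fourier r (\<lambda>a. gsum n f a r) t))^2)"
    using fourier_mult_eq_fourier_gsum[OF \<open>k * r = n\<close> assms(2)] by simp
  also have "\<dots> = real r * Gsum n f r"
    unfolding Gsum_def by (rule fourier_parseval[OF \<open>0 < r\<close>])
  finally show ?thesis
    unfolding r_def .
qed

lemma min_weight_le_divisor_sums:
  fixes n m l s :: nat
  assumes "0 < n"
  shows "min (real m ^ 2 * real (gcd s n) / real n) (real m)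
     \<le> (\<Sum>k | (1 \<le> k \<and> k \<le> l \<and> k dvd n) \<and> k dvd s. real m ^ 2 * real (totient k) / real n)
       + (\<Sum>k | (l < k \<and> k \<le> n \<and> k dvd n) \<and> k dvd s. real m)"
    (is "?w \<le> ?small + ?large")
proof -
  define d where "d = gcd s n"
  have "0 < d"
    using assms by (simp add: d_def)
  have "0 \<le> ?small" "0 \<le> ?large"
    by (simp_all add: sum_nonneg)
  show ?thesis
  proof (cases "d \<le> l")
    case True
    have "(1 \<le> k \<and> k \<le> l \<and> k dvd n) \<and> k dvd s \<longleftrightarrow> k dvd d" for k
    proof
      assume "k dvd d"
      moreover from this have "0 < k" "k \<le> d"
        using \<open>0 < d\<close> by (auto intro: dvd_imp_le Nat.gr0I)
      ultimately show "(1 \<le> k \<and> k \<le> l \<and> k dvd n) \<and> k dvd s"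
        using True by (simp add: d_def)
    qed (simp add: d_def)
    then have "{k. (1 \<le> k \<and> k \<le> l \<and> k dvd n) \<and> k dvd s} = {k. k dvd d}"
      by simp
    then have "?small = real m ^ 2 / real n * real (\<Sum>k | k dvd d. totient k)"
      by (simp add: sum_distrib_left sum_divide_distrib)
    also have "\<dots> = real m ^ 2 * real d / real n"
      by (simp add: totient_divisor_sum)
    finally have "?w \<le> ?small"
      by (simp add: d_def)
    then show ?thesis
      using \<open>0 \<le> ?large\<close> by linarith
  next
    case False
    then have "d \<in> {k. (l < k \<and> k \<le> n \<and> k dvd n) \<and> k dvd s}"
      using assms by (auto simp: d_def)
    then have "real m \<le> ?large"
      by (intro member_le_sum) (auto intro: finite_subset[of _ "{..n}"])
    then show ?thesis
      using \<open>0 \<le> ?small\<close> by linarith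
  qed
qed

lemma sum_mult_sum_dvd_swap:
  fixes F c :: "nat \<Rightarrow> 'a :: comm_semiring_0"
  assumes "finite D"
  shows "(\<Sum>s<n. F s * (\<Sum>k | k \<in> D \<and> k dvd s. c k)) = (\<Sum>k\<in>D. c k * (\<Sum>s | s < n \<and> k dvd s. F s))"
  using sum.swap_restrict[OF assms finite_lessThan, where g="\<lambda>k s. c k * F s" and R="\<lambda>k s. k dvd s"]
  by (simp add: sum_distrib_left mult_ac)

theorem lemma4p6:
  fixes n m l :: nat and f :: "nat \<Rightarrow> complex"
  assumes "n > 0" "0 < m" "m \<le> n" "0 < l" "l \<le> n"
  shows "(\<Sum>r<n. (cmod (fourier n f r))^2 *
            min (real m ^ 2 * real (gcd r n) / real n) (real m))
       \<le> (\<Sum>k\<in>{k. 1 \<le> k \<and> k \<le> l \<and> k dvd n}.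
             real m ^ 2 * real (totient k) / real k * Gsum n f (n div k))
         + (\<Sum>k\<in>{k. l < k \<and> k \<le> n \<and> k dvd n}.
             real m * real n / real k * Gsum n f (n div k))"
proof -
  define F where "F s = (cmod (fourier n f s))^2" for s
  define D1 where "D1 = {k. 1 \<le> k \<and> k \<le> l \<and> k dvd n}"
  define D2 where "D2 = {k. l < k \<and> k \<le> n \<and> k dvd n}"
  have "finite D1" "finite D2"
    unfolding D1_def D2_def by (auto intro: finite_subset[of _ "{..n}"])
  have multiples: "c / real n * (\<Sum>s | s < n \<and> k dvd s. F s) = c / real k * Gsum n f (n div k)"
    if "k dvd n" for c k
    using sum_fourier_multiples[OF that assms(1), of f] that assms(1)
    by (auto simp: F_def real_of_nat_div elim!: dvdE)
  have "(\<Sum>r<n. F r * min (real m ^ 2 * real (gcd r n) / real n) (real m))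
      \<le> (\<Sum>r<n. F r * ((\<Sum>k | k \<in> D1 \<and> k dvd r. real m ^ 2 * real (totient k) / real n)
                       + (\<Sum>k | k \<in> D2 \<and> k dvd r. real m)))"
    using min_weight_le_divisor_sums[OF assms(1)]
    by (intro sum_mono mult_left_mono) (simp_all add: F_def D1_def D2_def)
  also have "\<dots> = (\<Sum>k\<in>D1. real m ^ 2 * real (totient k) / real n * (\<Sum>s | s < n \<and> k dvd s. F s))
                + (\<Sum>k\<in>D2. real m * (\<Sum>s | s < n \<and> k dvd s. F s))"
    by (simp only: distrib_left sum.distrib
        sum_mult_sum_dvd_swap[OF \<open>finite D1\<close>] sum_mult_sum_dvd_swap[OF \<open>finite D2\<close>])
  also have "\<dots> = (\<Sum>k\<in>D1. real m ^ 2 * real (totient k) / real k * Gsum n f (n div k))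
                + (\<Sum>k\<in>D2. real m * real n / real k * Gsum n f (n div k))"
  proof (intro arg_cong2[where f="(+)"] sum.cong refl)
    fix k assume "k \<in> D1"
    then show "real m ^ 2 * real (totient k) / real n * (\<Sum>s | s < n \<and> k dvd s. F s)
             = real m ^ 2 * real (totient k) / real k * Gsum n f (n div k)"
      by (intro multiples) (simp add: D1_def)
  next
    fix k assume "k \<in> D2"
    then show "real m * (\<Sum>s | s < n \<and> k dvd s. F s) = real m * real n / real k * Gsum n f (n div k)"
      using multiples[of k "real m * real n"] assms(1) by (simp add: D2_def)
  qed
  finally show ?thesis
    by (simp only: F_def D1_def D2_def)
qed

end
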